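(* Let $\mathcal{M}_1=(\Sigma,\Gamma,\mathcal{H}_1,U^{(1)},M^{(1)})$ and $\mathcal{M}_2=(\Sigma,\Gamma,\mathcal{H}_2,U^{(2)},M^{(2)})$ be QMMs with initial density operators $\rho_1,\rho_2$, $n_1=\dim\mathcal{H}_1$, $n_2=\dim\mathcal{H}_2$, $n=n_1^2+n_2^2$. Then $(\mathcal{M}_1,\rho_1)\sim(\mathcal{M}_2,\rho_2)$ if and only if there exist a complex $n\times n$ matrix $F$ and complex $n\times n$ matrices $A_c$ for each $c\in\Sigma\cup\Gamma$ such that: (1) the first column of $F$ is $\begin{bmatrix}\vec\rho_1\\ \vec\rho_2\end{bmatrix}$; (2) $\eta^\dagger F=0$, where $\eta=\begin{bmatrix}\eta_{n_1}\\ -\eta_{n_2}\end{bmatrix}$; (3) for every $c\in\Sigma$: $\begin{bmatrix}\hat U^{(1)}_c&0\\0&\hat U^{(2)}_c\end{bmatrix}F=FA_c$; (4) for every $c\in\Gamma$: $\begin{bmatrix}\hat M^{(1)}_c&0\\0&\hat M^{(2)}_c\end{bmatrix}F=FA_c$.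
   Context: A quantum Mealy machine (QMM) is a tuple $\mathcal{M}=(\Sigma,\Gamma,\mathcal{H},U,M)$ where $\Sigma,\Gamma$ are finite alphabets, $\mathcal{H}$ a finite-dimensional complex Hilbert space, $U=\{U_\sigma\}_{\sigma\in\Sigma}$ unitary operators on $\mathcal{H}$, $M=\{M_\gamma\}_{\gamma\in\Gamma}$ linear operators with $\sum_\gamma M_\gamma^\dagger M_\gamma=I$. For a word $a$, $|a|$ is its length, $a[l:r]=a[l]\cdots a[r]$ (empty if $l>r$), $U_a=U_{a[|a|]}\cdots U_{a[1]}$, $U_\epsilon=I$. A scheduler for $a\in\Sigma^*$ is a finite non-decreasing integer sequence $\mathcal{S}=(s_1\le\dots\le s_{|\mathcal{S}|})$ in $\{0,\dots,|a|\}$ (possibly empty). With $s_0=0$, $s_{|\mathcal{S}|+1}=|a|$, $a_i=a[s_{i-1}+1:s_i]$. For $b\in\Gamma^{|\mathcal{S}|}$, $V_{b|a,\mathcal{S}}=U_{a_{|\mathcal{S}|+1}}M_{b_{|\mathcal{S}|}}U_{a_{|\mathcal{S}|}}\cdots M_{b_1}U_{a_1}$ and $\Pr^{\mathcal{M}}_\rho(b|a,\mathcal{S})=\operatorname{tr}(V_{b|a,\mathcal{S}}\rho V_{b|a,\mathcal{S}}^\dagger)$. $(\mathcal{M}_1,\rho_1)\sim(\mathcal{M}_2,\rho_2)$ means $\Pr^{\mathcal{M}_1}_{\rho_1}(b|a,\mathcal{S})=\Pr^{\mathcal{M}_2}_{\rho_2}(b|a,\mathcal{S})$ for all $a\in\Sigma^*$,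 schedulers $\mathcal{S}$ for $a$, and $b\in\Gamma^{|\mathcal{S}|}$. For a $d\times d$ matrix $\rho$, its vectorization $\vec\rho\in\mathbb{C}^{d^2}$ has entries $\vec\rho_{(i-1)d+j}=\rho_{ij}$; for a $d\times d$ matrix $A$, $\hat A$ is the $d^2\times d^2$ matrix with $\hat A_{(i-1)d+j,(x-1)d+y}=A_{ix}\overline{A_{jy}}$ (so $\overrightarrow{A\rho A^\dagger}=\hat A\vec\rho$); $\eta_d\in\mathbb{C}^{d^2}$ is the vectorization of the trace, $(\eta_d)_{(i-1)d+j}=\delta_{ij}$ (so $\operatorname{tr}\rho=\eta_d^\dagger\vec\rho$). *)

theory Defs
  imports "Jordan_Normal_Form.Matrix" Complex_Main
begin

definition dagger :: "complex mat \<Rightarrow> complex mat" where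
  "dagger A = mat (dim_col A) (dim_row A) (\<lambda>(i,j). cnj (A $$ (j,i)))"

definition mtrace :: "complex mat \<Rightarrow> complex" where
  "mtrace A = (\<Sum>i<dim_row A. A $$ (i,i))"

definition unitary_mat :: "nat \<Rightarrow> complex mat \<Rightarrow> bool" where
  "unitary_mat d U \<longleftrightarrow> U \<in> carrier_mat d d \<and> dagger U * U = 1\<^sub>m d \<and> U * dagger U = 1\<^sub>m d"

definition density_op :: "nat \<Rightarrow> complex mat \<Rightarrow> bool" where
  "density_op d \<rho> \<longleftrightarrow> \<rho> \<in> carrier_mat d d \<and>
     (\<forall>v \<in> carrier_vec d. Im (conjugate v \<bullet> (\<rho> *\<^sub>v v)) = 0 \<and> Re (conjugate v \<bullet> (\<rho> *\<^sub>v v)) \<ge> 0) \<and>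
     mtrace \<rho> = 1"

definition is_QMM :: "'a set \<Rightarrow> 'b set \<Rightarrow> nat \<Rightarrow> ('a \<Rightarrow> complex mat) \<Rightarrow> ('b \<Rightarrow> complex mat) \<Rightarrow> bool" where
  "is_QMM Sig Gam d U M \<longleftrightarrow> finite Sig \<and> finite Gam \<and>
     (\<forall>\<sigma>\<in>Sig. unitary_mat d (U \<sigma>)) \<and>
     (\<forall>\<gamma>\<in>Gam. M \<gamma> \<in> carrier_mat d d) \<and>
     mat d d (\<lambda>(i,j). \<Sum>\<gamma>\<in>Gam. (dagger (M \<gamma>) * M \<gamma>) $$ (i,j)) = 1\<^sub>m d"

definition U_word :: "nat \<Rightarrow> ('a \<Rightarrow> complex mat) \<Rightarrow> 'a list \<Rightarrow> complex mat" where
  "U_word d U w = foldl (\<lambda>acc \<sigma>. U \<sigma> * acc) (1\<^sub>m d) w"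

(* a[l:r] with 1-based indices, empty if l > r *)
definition subword :: "'a list \<Rightarrow> nat \<Rightarrow> nat \<Rightarrow> 'a list" where
  "subword a l r = drop (l - 1) (take r a)"

definition is_scheduler :: "'a list \<Rightarrow> nat list \<Rightarrow> bool" where
  "is_scheduler a S \<longleftrightarrow> sorted S \<and> (\<forall>s \<in> set S. s \<le> length a)"

definition segments :: "'a list \<Rightarrow> nat list \<Rightarrow> 'a list list" where
  "segments a S = (let bs = 0 # S @ [length a] in
      map (\<lambda>i. subword a (bs ! i + 1) (bs ! (i + 1))) [0..<length S + 1])"

(* V_{b|a,S} = U_{a_{|S|+1}} M_{b_|S|} U_{a_|S|} ... M_{b_1} U_{a_1} *)
definition V_op :: "nat \<Rightarrow> ('a \<Rightarrow> complex mat) \<Rightarrow> ('b \<Rightarrow> complex mat) \<Rightarrow> 'b list \<Rightarrow> 'a list \<Rightarrow> nat list \<Rightarrow> complex mat" where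
  "V_op d U M b a S = (let segs = segments a S in
     foldl (\<lambda>acc (g, w). U_word d U w * M g * acc) (U_word d U (hd segs)) (zip b (tl segs)))"

definition Pr_QMM :: "nat \<Rightarrow> ('a \<Rightarrow> complex mat) \<Rightarrow> ('b \<Rightarrow> complex mat) \<Rightarrow> complex mat \<Rightarrow> 'b list \<Rightarrow> 'a list \<Rightarrow> nat list \<Rightarrow> complex" where
  "Pr_QMM d U M \<rho> b a S = (let V = V_op d U M b a S in mtrace (V * \<rho> * dagger V))"

definition QMM_equiv :: "'a set \<Rightarrow> 'b set \<Rightarrow> nat \<Rightarrow> ('a \<Rightarrow> complex mat) \<Rightarrow> ('b \<Rightarrow> complex mat) \<Rightarrow> complex mat
     \<Rightarrow> nat \<Rightarrow> ('a \<Rightarrow> complex mat) \<Rightarrow> ('b \<Rightarrow> complex mat) \<Rightarrow> complex mat \<Rightarrow> bool" where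
  "QMM_equiv Sig Gam d1 U1 M1 \<rho>1 d2 U2 M2 \<rho>2 \<longleftrightarrow>
     (\<forall>a \<in> lists Sig. \<forall>S. is_scheduler a S \<longrightarrow>
        (\<forall>b \<in> lists Gam. length b = length S \<longrightarrow>
           Pr_QMM d1 U1 M1 \<rho>1 b a S = Pr_QMM d2 U2 M2 \<rho>2 b a S))"

(* vectorization: entry (i-1)d+j is rho_ij (0-based: i*d+j) *)
definition vectorize :: "nat \<Rightarrow> complex mat \<Rightarrow> complex vec" where
  "vectorize d \<rho> = vec (d * d) (\<lambda>k. \<rho> $$ (k div d, k mod d))"

(* hat A with hat A_{(i,j),(x,y)} = A_ix * conj(A_jy) *)
definition hat_mat :: "nat \<Rightarrow> complex mat \<Rightarrow> complex mat" where
  "hat_mat d A = mat (d * d) (d * d)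
     (\<lambda>(r, c). A $$ (r div d, c div d) * cnj (A $$ (r mod d, c mod d)))"

(* eta_d: vectorization of the trace functional *)
definition eta_vec :: "nat \<Rightarrow> complex vec" where
  "eta_vec d = vec (d * d) (\<lambda>k. if k div d = k mod d then 1 else 0)"

end

theory Submission
  imports Defs "Jordan_Normal_Form.VS_Connect"
begin

text \<open>
  A run of a QMM (input word, scheduler, outcomes) is the same thing as a single word over
  \<open>\<Sigma> + \<Gamma>\<close>, and its probability is \<open>tr (W \<rho> W\<^sup>\<dagger>)\<close> for the product \<open>W\<close> of the letter
  operators. Vectorizing turns this into \<open>\<eta>\<^sup>\<dagger> (hat_mat W) (vectorize \<rho>)\<close>, and \<open>hat_mat\<close> is
  multiplicative, so the difference of the two probabilities of a word \<open>w\<close> is \<open>e\<^sup>\<dagger> B\<^sub>w v\<close> for the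
  block-diagonal letter matrices \<open>B\<^sub>c\<close>, \<open>v = [vec \<rho>\<^sub>1; vec \<rho>\<^sub>2]\<close> and \<open>e = [\<eta>; -\<eta>]\<close>.
  Equivalence therefore says that \<open>e\<close> is orthogonal to the orbit \<open>K = {B\<^sub>w v}\<close>. The orbit is
  closed under every \<open>B\<^sub>c\<close> and contains \<open>v\<close>, so a square matrix \<open>F\<close> whose columns are \<open>v\<close>,
  further vectors of \<open>K\<close> spanning \<open>K\<close>, and zeros satisfies \<open>B\<^sub>c F = F A\<^sub>c\<close> and \<open>e\<^sup>\<dagger> F = 0\<close>.
  Conversely such an \<open>F\<close> gives \<open>B\<^sub>w v = F A\<^sub>w e\<^sub>1\<close>, which is orthogonal to \<open>e\<close>.
\<close>

lemma segments_length: "length (segments a S) = Suc (length S)"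
  by (simp add: segments_def Let_def)

lemma segments_snoc_length: "segments a (S @ [length a]) = segments a S @ [[]]"
proof -
  define bs where "bs = 0 # S"
  have len_bs: "length bs = Suc (length S)" by (simp add: bs_def)
  have "segments a (S @ [length a]) = map (\<lambda>i. subword a ((bs @ [length a, length a]) ! i + 1)
      ((bs @ [length a, length a]) ! (i + 1))) ([0..<length S + 1] @ [length S + 1])"
    by (simp add: segments_def Let_def bs_def)
  also have "\<dots> = map (\<lambda>i. subword a ((bs @ [length a]) ! i + 1) ((bs @ [length a]) ! (i + 1)))
      [0..<length S + 1] @ [[]]"
    using len_bs by (auto simp: nth_append subword_def)
  also have "\<dots> = segments a S @ [[]]"
    by (simp add: segments_def Let_def bs_def)
  finally show ?thesis .
qed

lemma segments_snoc_letter: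
  assumes "\<forall>s\<in>set S. s \<le> length a"
  shows "segments (a @ [x]) S = butlast (segments a S) @ [last (segments a S) @ [x]]"
proof -
  define bs where "bs = 0 # S"
  have bs_le: "\<forall>s\<in>set bs. s \<le> length a" using assms by (auto simp: bs_def)
  have len_bs: "length bs = Suc (length S)" by (simp add: bs_def)
  have lhs: "segments (a @ [x]) S = map (\<lambda>i. subword (a @ [x]) ((bs @ [Suc (length a)]) ! i + 1)
      ((bs @ [Suc (length a)]) ! (i + 1))) ([0..<length S] @ [length S])"
    by (simp add: segments_def Let_def bs_def)
  have rhs: "segments a S = map (\<lambda>i. subword a ((bs @ [length a]) ! i + 1)
      ((bs @ [length a]) ! (i + 1))) ([0..<length S] @ [length S])"
    by (simp add: segments_def Let_def bs_def)
  have inner: "map (\<lambda>i. subword (a @ [x]) ((bs @ [Suc (length a)]) ! i + 1)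
      ((bs @ [Suc (length a)]) ! (i + 1))) [0..<length S] =
    map (\<lambda>i. subword a ((bs @ [length a]) ! i + 1) ((bs @ [length a]) ! (i + 1))) [0..<length S]"
  proof (rule map_cong[OF refl])
    fix i assume "i \<in> set [0..<length S]"
    then have i: "i < length S" by simp
    then have "bs ! Suc i \<le> length a" using bs_le len_bs by (metis Suc_mono nth_mem)
    then show "subword (a @ [x]) ((bs @ [Suc (length a)]) ! i + 1) ((bs @ [Suc (length a)]) ! (i + 1)) =
        subword a ((bs @ [length a]) ! i + 1) ((bs @ [length a]) ! (i + 1))"
      using i len_bs by (simp add: nth_append subword_def)
  qed
  have "bs ! length S \<le> length a" using bs_le len_bs by (metis lessI nth_mem)
  then have final: "subword (a @ [x]) ((bs @ [Suc (length a)]) ! length S + 1)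
      ((bs @ [Suc (length a)]) ! (length S + 1)) =
    subword a ((bs @ [length a]) ! length S + 1) ((bs @ [length a]) ! (length S + 1)) @ [x]"
    using len_bs by (simp add: nth_append subword_def)
  show ?thesis unfolding lhs rhs map_append butlast_snoc last_snoc list.map inner final ..
qed

lemma set_segments: "x \<in> set (segments a S) \<Longrightarrow> set x \<subseteq> set a"
  by (auto simp: segments_def Let_def subword_def dest: in_set_dropD in_set_takeD)

definition interleave :: "('b \<times> 'a list) list \<Rightarrow> ('a + 'b) list" where
  "interleave ps = concat (map (\<lambda>(g, x). Inr g # map Inl x) ps)"

text \<open>The letters of a run in the order they act: \<open>Inl\<close> for a unitary, \<open>Inr\<close> for a measurement.\<close>

definition run_word :: "'a list \<Rightarrow> nat list \<Rightarrow> 'b list \<Rightarrow> ('a + 'b) list" where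
  "run_word a S b = map Inl (hd (segments a S)) @ interleave (zip b (tl (segments a S)))"

lemma interleave_snoc [simp]: "interleave (ps @ [(g, x)]) = interleave ps @ Inr g # map Inl x"
  by (simp add: interleave_def)

lemma segments_ConsE:
  obtains y ys where "segments a S = y # ys" "length ys = length S"
  using segments_length[of a S] by (metis length_Suc_conv)

lemma run_word_snoc_measurement:
  assumes "length b = length S"
  shows "run_word a (S @ [length a]) (b @ [g]) = run_word a S b @ [Inr g]"
proof -
  obtain y ys where "segments a S = y # ys" "length ys = length S"
    by (rule segments_ConsE)
  then show ?thesis using assms by (simp add: run_word_def segments_snoc_length)
qed

lemma run_word_snoc_letter:
  assumes "\<forall>s\<in>set S. s \<le> length a" "length b = length S"
  shows "run_word (a @ [x]) S b = run_word a S b @ [Inl x]"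
proof -
  obtain y ys where seg: "segments a S = y # ys" and len: "length ys = length b"
    using assms(2) by (metis segments_ConsE)
  show ?thesis
  proof (cases "ys = []")
    case True
    then show ?thesis using seg segments_snoc_letter[OF assms(1), of x] len
      by (simp add: run_word_def interleave_def)
  next
    case False
    then obtain ys' z where ys: "ys = ys' @ [z]" by (metis rev_exhaust)
    then obtain b' h where b: "b = b' @ [h]" using len by (metis length_0_conv snoc_eq_iff_butlast)
    have "length ys' = length b'" using len ys b by simp
    then show ?thesis using seg segments_snoc_letter[OF assms(1), of x] ys b
      by (simp add: run_word_def butlast_append)
  qed
qed

lemma run_word_surj:
  assumes "w \<in> lists (Inl ` Sig \<union> Inr ` Gam)"
  shows "\<exists>a S b. a \<in> lists Sig \<and> is_scheduler a S \<and> b \<in> lists Gam \<and> length b = length S \<and>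
    run_word a S b = w"
  using assms
proof (induction w rule: rev_induct)
  case Nil
  have "run_word [] [] ([] :: 'b list) = ([] :: ('a + 'b) list)"
    by (simp add: run_word_def segments_def subword_def interleave_def)
  then show ?case by (intro exI[of _ "[]"]) (auto simp: is_scheduler_def)
next
  case (snoc c w)
  then obtain a S b where IH: "a \<in> lists Sig" "is_scheduler a S" "b \<in> lists Gam"
    "length b = length S" "run_word a S b = w"
    by auto
  have le: "\<forall>s\<in>set S. s \<le> length a" using IH(2) by (simp add: is_scheduler_def)
  show ?case
  proof (cases c)
    case (Inl x)
    then have "x \<in> Sig" using snoc.prems by auto
    moreover have "is_scheduler (a @ [x]) S" using IH(2) by (auto simp: is_scheduler_def)
    ultimately show ?thesis using IH run_word_snoc_letter[OF le IH(4)] Inl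
      by (intro exI[of _ "a @ [x]"] exI[of _ S] exI[of _ b]) auto
  next
    case (Inr g)
    then have "g \<in> Gam" using snoc.prems by auto
    moreover have "is_scheduler a (S @ [length a])" using IH(2) le
      by (auto simp: is_scheduler_def sorted_append)
    ultimately show ?thesis using IH run_word_snoc_measurement[OF IH(4)] Inr
      by (intro exI[of _ a] exI[of _ "S @ [length a]"] exI[of _ "b @ [g]"]) auto
  qed
qed

lemma segments_letters:
  assumes "a \<in> lists Sig" "b \<in> lists Gam" "segments a S = y # ys"
  shows "set y \<subseteq> Sig" and "\<And>g x. (g, x) \<in> set (zip b ys) \<Longrightarrow> g \<in> Gam \<and> set x \<subseteq> Sig"
proof -
  have "\<forall>z\<in>set (y # ys). set z \<subseteq> Sig" using set_segments[of _ a S] assms by fastforce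
  then show "set y \<subseteq> Sig" "\<And>g x. (g, x) \<in> set (zip b ys) \<Longrightarrow> g \<in> Gam \<and> set x \<subseteq> Sig"
    using assms(2) by (auto dest: set_zip_leftD set_zip_rightD)
qed

lemma interleave_in_lists:
  "(\<And>g x. (g, x) \<in> set ps \<Longrightarrow> g \<in> Gam \<and> set x \<subseteq> Sig) \<Longrightarrow>
    interleave ps \<in> lists (Inl ` Sig \<union> Inr ` Gam)"
  by (fastforce simp: interleave_def)

lemma run_word_in_lists:
  assumes "a \<in> lists Sig" "b \<in> lists Gam"
  shows "run_word a S b \<in> lists (Inl ` Sig \<union> Inr ` Gam)"
proof -
  obtain y ys where seg: "segments a S = y # ys" by (rule segments_ConsE)
  show ?thesis
    using segments_letters[OF assms seg] interleave_in_lists[of "zip b ys" Gam Sig]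
    by (fastforce simp: run_word_def seg)
qed

lemma U_word_Nil [simp]: "U_word d U [] = 1\<^sub>m d"
  by (simp add: U_word_def)

lemma U_word_snoc: "U_word d U (w @ [c]) = U c * U_word d U w"
  by (simp add: U_word_def)

lemma U_word_carrier:
  "(\<And>c. c \<in> set w \<Longrightarrow> U c \<in> carrier_mat d d) \<Longrightarrow> U_word d U w \<in> carrier_mat d d"
  by (induction w rule: rev_induct) (auto simp: U_word_snoc intro!: mult_carrier_mat)

lemma U_word_append:
  assumes "\<And>c. c \<in> set xs \<union> set ys \<Longrightarrow> U c \<in> carrier_mat d d"
  shows "U_word d U (xs @ ys) = U_word d U ys * U_word d U xs"
  using assms
proof (induction ys rule: rev_induct)
  case Nil
  then show ?case using U_word_carrier[of xs U d] by simp
next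
  case (snoc c ys)
  have "U c \<in> carrier_mat d d" "U_word d U ys \<in> carrier_mat d d" "U_word d U xs \<in> carrier_mat d d"
    using snoc.prems U_word_carrier[of ys U d] U_word_carrier[of xs U d] by auto
  moreover have "U_word d U (xs @ ys) = U_word d U ys * U_word d U xs"
    using snoc by simp
  ultimately show ?case
    by (simp add: U_word_snoc flip: append_assoc)
qed

lemma U_word_map_Inl: "U_word d (case_sum U M) (map Inl x) = U_word d U x"
  by (simp add: U_word_def foldl_map)

lemma V_op_foldl_eq_U_word:
  assumes U: "\<And>s. s \<in> Sig \<Longrightarrow> U s \<in> carrier_mat d d"
    and M: "\<And>g. g \<in> Gam \<Longrightarrow> M g \<in> carrier_mat d d"
    and ps: "\<And>g x. (g, x) \<in> set ps \<Longrightarrow> g \<in> Gam \<and> set x \<subseteq> Sig"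
    and X: "X \<in> carrier_mat d d"
  shows "foldl (\<lambda>acc (g, w). U_word d U w * M g * acc) X ps
    = U_word d (case_sum U M) (interleave ps) * X"
  using ps
proof (induction ps rule: rev_induct)
  case Nil
  then show ?case using X by (simp add: interleave_def)
next
  case (snoc p ps)
  obtain g x where p: "p = (g, x)" by fastforce
  have g: "g \<in> Gam" and x: "set x \<subseteq> Sig" using snoc.prems p by auto
  have letters: "case_sum U M c \<in> carrier_mat d d" if "c \<in> Inl ` Sig \<union> Inr ` Gam" for c
    using that U M by auto
  have "set (interleave ps) \<subseteq> Inl ` Sig \<union> Inr ` Gam"
    using interleave_in_lists[of ps Gam Sig] snoc.prems by auto
  then have W: "U_word d (case_sum U M) (interleave ps) \<in> carrier_mat d d"
    using letters by (intro U_word_carrier) blast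
  have Ux: "U_word d U x \<in> carrier_mat d d" using x U by (intro U_word_carrier) blast
  have "U_word d (case_sum U M) (interleave (ps @ [p]))
      = U_word d (case_sum U M) (map Inl x) * U_word d (case_sum U M) (interleave ps @ [Inr g])"
    unfolding p interleave_snoc
    using \<open>set (interleave ps) \<subseteq> _\<close> g x by (subst U_word_append[symmetric]) (fastforce intro: letters U)+
  also have "\<dots> = U_word d U x * M g * U_word d (case_sum U M) (interleave ps)"
    using Ux M[OF g] W by (simp add: U_word_map_Inl U_word_snoc)
  finally have word: "U_word d (case_sum U M) (interleave (ps @ [p]))
      = U_word d U x * M g * U_word d (case_sum U M) (interleave ps)" .
  have "foldl (\<lambda>acc (g, w). U_word d U w * M g * acc) X ps
      = U_word d (case_sum U M) (interleave ps) * X"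
    using snoc.IH snoc.prems by auto
  then have "foldl (\<lambda>acc (g, w). U_word d U w * M g * acc) X (ps @ [p])
      = U_word d U x * M g * (U_word d (case_sum U M) (interleave ps) * X)"
    by (simp add: p)
  also have "\<dots> = U_word d U x * M g * U_word d (case_sum U M) (interleave ps) * X"
    by (rule assoc_mult_mat[symmetric, OF mult_carrier_mat[OF Ux M[OF g]] W X])
  finally show ?case
    unfolding word .
qed

lemma V_op_eq_U_word_run_word:
  assumes U: "\<And>s. s \<in> Sig \<Longrightarrow> U s \<in> carrier_mat d d"
    and M: "\<And>g. g \<in> Gam \<Longrightarrow> M g \<in> carrier_mat d d"
    and "a \<in> lists Sig" "b \<in> lists Gam"
  shows "V_op d U M b a S = U_word d (case_sum U M) (run_word a S b)"
proof -
  obtain y ys where seg: "segments a S = y # ys" by (rule segments_ConsE)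
  note y = segments_letters(1)[OF assms(3,4) seg] and zip = segments_letters(2)[OF assms(3,4) seg]
  have Uy: "U_word d U y \<in> carrier_mat d d" using y U by (intro U_word_carrier) blast
  have "set (interleave (zip b ys)) \<subseteq> Inl ` Sig \<union> Inr ` Gam"
    using interleave_in_lists[OF zip] by blast
  then have "U_word d (case_sum U M) (map Inl y @ interleave (zip b ys))
      = U_word d (case_sum U M) (interleave (zip b ys)) * U_word d U y"
    using y U M by (subst U_word_append) (auto simp: U_word_map_Inl)
  then show ?thesis
    unfolding V_op_def Let_def seg list.sel run_word_def
    using V_op_foldl_eq_U_word[OF U M zip Uy] by simp
qed

definition word_prob :: "nat \<Rightarrow> ('c \<Rightarrow> complex mat) \<Rightarrow> complex mat \<Rightarrow> 'c list \<Rightarrow> complex" where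
  "word_prob d L \<rho> w = mtrace (U_word d L w * \<rho> * dagger (U_word d L w))"

lemma QMM_equiv_iff_word_prob:
  assumes "\<And>s. s \<in> Sig \<Longrightarrow> U1 s \<in> carrier_mat d1 d1" "\<And>g. g \<in> Gam \<Longrightarrow> M1 g \<in> carrier_mat d1 d1"
    and "\<And>s. s \<in> Sig \<Longrightarrow> U2 s \<in> carrier_mat d2 d2" "\<And>g. g \<in> Gam \<Longrightarrow> M2 g \<in> carrier_mat d2 d2"
  shows "QMM_equiv Sig Gam d1 U1 M1 \<rho>1 d2 U2 M2 \<rho>2 \<longleftrightarrow>
    (\<forall>w \<in> lists (Inl ` Sig \<union> Inr ` Gam).
       word_prob d1 (case_sum U1 M1) \<rho>1 w = word_prob d2 (case_sum U2 M2) \<rho>2 w)"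
proof -
  have Pr: "Pr_QMM d1 U1 M1 \<rho>1 b a S = word_prob d1 (case_sum U1 M1) \<rho>1 (run_word a S b)"
    "Pr_QMM d2 U2 M2 \<rho>2 b a S = word_prob d2 (case_sum U2 M2) \<rho>2 (run_word a S b)"
    if "a \<in> lists Sig" "b \<in> lists Gam" for a b S
    using V_op_eq_U_word_run_word[where U = U1 and M = M1, OF assms(1,2) that]
      V_op_eq_U_word_run_word[where U = U2 and M = M2, OF assms(3,4) that]
    by (simp_all add: Pr_QMM_def word_prob_def Let_def)
  show ?thesis
    unfolding QMM_equiv_def
    using Pr run_word_in_lists run_word_surj by metis
qed

lemma div_mod_less_square: "r < (d::nat) * d \<Longrightarrow> r div d < d \<and> r mod d < d"
  by (metis less_mult_imp_div_less mod_less_divisor mult_eq_0_iff not_gr_zero not_less_zero)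

lemma mult_add_less_square:
  assumes "i < d" "j < (d::nat)"
  shows "i * d + j < d * d"
proof -
  have "i * d + j < Suc i * d" using assms by simp
  also have "\<dots> \<le> d * d" using assms by (intro mult_le_mono1) simp
  finally show ?thesis .
qed

lemma sum_square_div_mod:
  "(\<Sum>k<(d::nat) * d. f (k div d) (k mod d)) = (\<Sum>i<d. \<Sum>j<d. (f i j :: 'c :: comm_monoid_add))"
proof -
  have "(\<Sum>k<d * d. f (k div d) (k mod d)) = (\<Sum>(i, j)\<in>{..<d} \<times> {..<d}. f i j)"
    by (intro sum.reindex_bij_witness[of _ "\<lambda>(i, j). i * d + j" "\<lambda>k. (k div d, k mod d)"])
      (auto simp: div_mod_less_square mult_add_less_square)
  also have "\<dots> = (\<Sum>i<d. \<Sum>j<d. f i j)" by (simp add: sum.cartesian_product)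
  finally show ?thesis .
qed

lemma sum_square_mult_add:
  "(\<Sum>k<(d::nat) * d. g k) = (\<Sum>i<d. \<Sum>j<d. (g (i * d + j) :: 'c :: comm_monoid_add))"
  using sum_square_div_mod[of "\<lambda>i j. g (i * d + j)" d] by simp

lemma hat_mat_carrier [simp]: "hat_mat d A \<in> carrier_mat (d * d) (d * d)"
  by (simp add: hat_mat_def)

lemma vectorize_carrier [simp]: "vectorize d A \<in> carrier_vec (d * d)"
  by (simp add: vectorize_def)

lemma eta_vec_carrier [simp]: "eta_vec d \<in> carrier_vec (d * d)"
  by (simp add: eta_vec_def)

lemma eta_vec_scalar_prod_vectorize:
  assumes "R \<in> carrier_mat d d"
  shows "eta_vec d \<bullet> vectorize d R = mtrace R"
proof -
  have "eta_vec d \<bullet> vectorize d R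
      = (\<Sum>k<d * d. (\<lambda>i j. (if i = j then 1 else 0) * R $$ (i, j)) (k div d) (k mod d))"
    by (simp add: scalar_prod_def eta_vec_def vectorize_def atLeast0LessThan)
  also have "\<dots> = (\<Sum>i<d. \<Sum>j<d. (if i = j then 1 else 0) * R $$ (i, j))"
    by (rule sum_square_div_mod)
  also have "\<dots> = mtrace R"
    using assms by (simp add: mtrace_def if_distrib[of "\<lambda>x. x * _"] cong: if_cong)
  finally show ?thesis .
qed

lemma mtrace_conj_eq_eta_hat_mat:
  assumes A: "A \<in> carrier_mat d d" and R: "R \<in> carrier_mat d d"
  shows "mtrace (A * R * dagger A) = eta_vec d \<bullet> (hat_mat d A *\<^sub>v vectorize d R)"
proof -
  have [simp]: "dim_row A = d" "dim_col A = d" "dim_row R = d" "dim_col R = d" using A R by auto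
  have "mtrace (A * R * dagger A) = (\<Sum>i<d. \<Sum>y<d. (\<Sum>x<d. A $$ (i, x) * R $$ (x, y)) * cnj (A $$ (i, y)))"
    unfolding mtrace_def
    by (intro sum.cong) (simp_all add: scalar_prod_def atLeast0LessThan row_def col_def dagger_def)
  also have "\<dots> = (\<Sum>i<d. \<Sum>x<d. \<Sum>y<d. A $$ (i, x) * cnj (A $$ (i, y)) * R $$ (x, y))"
  proof (rule sum.cong[OF refl])
    fix i
    have "(\<Sum>y<d. (\<Sum>x<d. A $$ (i, x) * R $$ (x, y)) * cnj (A $$ (i, y)))
        = (\<Sum>y<d. \<Sum>x<d. A $$ (i, x) * cnj (A $$ (i, y)) * R $$ (x, y))"
      by (simp add: sum_distrib_left sum_distrib_right mult_ac)
    also have "\<dots> = (\<Sum>x<d. \<Sum>y<d. A $$ (i, x) * cnj (A $$ (i, y)) * R $$ (x, y))"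
      by (rule sum.swap)
    finally show "(\<Sum>y<d. (\<Sum>x<d. A $$ (i, x) * R $$ (x, y)) * cnj (A $$ (i, y)))
        = (\<Sum>x<d. \<Sum>y<d. A $$ (i, x) * cnj (A $$ (i, y)) * R $$ (x, y))" .
  qed
  also have "\<dots> = (\<Sum>i<d. \<Sum>j<d. if i = j then
      \<Sum>x<d. \<Sum>y<d. A $$ (i, x) * cnj (A $$ (j, y)) * R $$ (x, y) else 0)"
    by simp
  also have "\<dots> = eta_vec d \<bullet> (hat_mat d A *\<^sub>v vectorize d R)"
    by (simp add: scalar_prod_def eta_vec_def hat_mat_def vectorize_def atLeast0LessThan row_def
        sum_square_mult_add mult_add_less_square if_distrib[of "\<lambda>x. x * _"] cong: if_cong)
  finally show ?thesis .
qed

lemma hat_mat_mult: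
  assumes A: "A \<in> carrier_mat d d" and B: "B \<in> carrier_mat d d"
  shows "hat_mat d (A * B) = hat_mat d A * hat_mat d B"
proof (rule eq_matI)
  fix r s assume "r < dim_row (hat_mat d A * hat_mat d B)" "s < dim_col (hat_mat d A * hat_mat d B)"
  then have rs: "r < d * d" "s < d * d" by (simp_all add: hat_mat_def)
  define i j k l where "i = r div d" "j = r mod d" "k = s div d" "l = s mod d"
  have bounds: "i < d" "j < d" "k < d" "l < d"
    using div_mod_less_square rs by (auto simp: i_j_k_l_def)
  have [simp]: "dim_row A = d" "dim_col A = d" "dim_row B = d" "dim_col B = d" using A B by auto
  have "hat_mat d (A * B) $$ (r, s)
      = (\<Sum>x<d. A $$ (i, x) * B $$ (x, k)) * cnj (\<Sum>y<d. A $$ (j, y) * B $$ (y, l))"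
    using rs bounds by (simp add: hat_mat_def i_j_k_l_def scalar_prod_def atLeast0LessThan)
  also have "\<dots> = (\<Sum>x<d. \<Sum>y<d. (A $$ (i, x) * cnj (A $$ (j, y))) * (B $$ (x, k) * cnj (B $$ (y, l))))"
    by (simp add: sum_product mult_ac)
  also have "\<dots> = (\<Sum>c<d * d. (A $$ (i, c div d) * cnj (A $$ (j, c mod d)))
      * (B $$ (c div d, k) * cnj (B $$ (c mod d, l))))"
    by (rule sum_square_div_mod[symmetric])
  also have "\<dots> = (hat_mat d A * hat_mat d B) $$ (r, s)"
    using rs bounds by (simp add: hat_mat_def i_j_k_l_def scalar_prod_def atLeast0LessThan)
  finally show "hat_mat d (A * B) $$ (r, s) = (hat_mat d A * hat_mat d B) $$ (r, s)" .
qed (simp_all add: hat_mat_def)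

lemma hat_mat_one: "hat_mat d (1\<^sub>m d) = 1\<^sub>m (d * d)"
proof (rule eq_matI)
  fix r s assume "r < dim_row (1\<^sub>m (d * d))" "s < dim_col (1\<^sub>m (d * d) :: complex mat)"
  then have rs: "r < d * d" "s < d * d" by simp_all
  have "r div d = s div d \<and> r mod d = s mod d \<longleftrightarrow> r = s"
    by (metis div_mult_mod_eq)
  then show "hat_mat d (1\<^sub>m d) $$ (r, s) = 1\<^sub>m (d * d) $$ (r, s)"
    using rs div_mod_less_square[OF rs(1)] div_mod_less_square[OF rs(2)] by (auto simp: hat_mat_def)
qed (simp_all add: hat_mat_def)

lemma hat_mat_U_word:
  assumes "\<And>c. c \<in> set w \<Longrightarrow> L c \<in> carrier_mat d d"
  shows "hat_mat d (U_word d L w) = U_word (d * d) (\<lambda>c. hat_mat d (L c)) w"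
  using assms
proof (induction w rule: rev_induct)
  case Nil
  then show ?case by (simp add: hat_mat_one)
next
  case (snoc c w)
  have "U_word d L w \<in> carrier_mat d d"
    using snoc.prems by (intro U_word_carrier) auto
  then show ?case using snoc by (simp add: U_word_snoc hat_mat_mult)
qed

lemma U_word_four_block_diag:
  assumes "\<And>c. B1 c \<in> carrier_mat N1 N1" and "\<And>c. B2 c \<in> carrier_mat N2 N2"
  shows "U_word (N1 + N2) (\<lambda>c. four_block_mat (B1 c) (0\<^sub>m N1 N2) (0\<^sub>m N2 N1) (B2 c)) w =
    four_block_mat (U_word N1 B1 w) (0\<^sub>m N1 N2) (0\<^sub>m N2 N1) (U_word N2 B2 w)"
proof (induction w rule: rev_induct)
  case (snoc c w)
  have W: "U_word N1 B1 w \<in> carrier_mat N1 N1" "U_word N2 B2 w \<in> carrier_mat N2 N2"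
    using assms by (auto intro: U_word_carrier)
  show ?case
    unfolding U_word_snoc snoc.IH
    by (subst mult_four_block_mat[OF assms(1)[of c] zero_carrier_mat zero_carrier_mat assms(2)[of c]
        W(1) zero_carrier_mat zero_carrier_mat W(2)])
      (use mult_carrier_mat[OF assms(1) W(1)] mult_carrier_mat[OF assms(2) W(2)] in
        \<open>simp add: right_mult_zero_mat[OF assms(1)] right_mult_zero_mat[OF assms(2)]
          left_mult_zero_mat[OF W(1)] left_mult_zero_mat[OF W(2)]\<close>)
qed simp

definition hat_block :: "nat \<Rightarrow> nat \<Rightarrow> ('c \<Rightarrow> complex mat) \<Rightarrow> ('c \<Rightarrow> complex mat) \<Rightarrow> 'c \<Rightarrow> complex mat"
  where "hat_block n1 n2 L1 L2 c =
    four_block_mat (hat_mat n1 (L1 c)) (0\<^sub>m (n1^2) (n2^2)) (0\<^sub>m (n2^2) (n1^2)) (hat_mat n2 (L2 c))"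

lemma hat_block_carrier: "hat_block n1 n2 L1 L2 c \<in> carrier_mat (n1^2 + n2^2) (n1^2 + n2^2)"
  by (simp add: hat_block_def power2_eq_square)

lemma word_prob_eq_eta_hat:
  assumes "\<And>c. c \<in> set w \<Longrightarrow> L c \<in> carrier_mat d d" and "\<rho> \<in> carrier_mat d d"
  shows "word_prob d L \<rho> w = eta_vec d \<bullet> (U_word (d * d) (\<lambda>c. hat_mat d (L c)) w *\<^sub>v vectorize d \<rho>)"
proof -
  have "U_word d L w \<in> carrier_mat d d" using assms(1) by (rule U_word_carrier)
  then show ?thesis
    using mtrace_conj_eq_eta_hat_mat[OF _ assms(2)] hat_mat_U_word[of w L d, OF assms(1)]
    by (simp add: word_prob_def)
qed

lemma word_prob_diff_eq_hat_block:
  assumes "\<And>c. c \<in> set w \<Longrightarrow> L1 c \<in> carrier_mat n1 n1" "\<And>c. c \<in> set w \<Longrightarrow> L2 c \<in> carrier_mat n2 n2"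
    and "\<rho>1 \<in> carrier_mat n1 n1" "\<rho>2 \<in> carrier_mat n2 n2"
  shows "word_prob n1 L1 \<rho>1 w - word_prob n2 L2 \<rho>2 w =
    (eta_vec n1 @\<^sub>v - eta_vec n2) \<bullet>
      (U_word (n1^2 + n2^2) (hat_block n1 n2 L1 L2) w *\<^sub>v (vectorize n1 \<rho>1 @\<^sub>v vectorize n2 \<rho>2))"
proof -
  define W1 where "W1 = U_word (n1 * n1) (\<lambda>c. hat_mat n1 (L1 c)) w"
  define W2 where "W2 = U_word (n2 * n2) (\<lambda>c. hat_mat n2 (L2 c)) w"
  have W: "W1 \<in> carrier_mat (n1 * n1) (n1 * n1)" "W2 \<in> carrier_mat (n2 * n2) (n2 * n2)"
    by (auto simp: W1_def W2_def intro: U_word_carrier)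
  have "U_word (n1^2 + n2^2) (hat_block n1 n2 L1 L2) w = four_block_mat W1 (0\<^sub>m (n1 * n1) (n2 * n2))
      (0\<^sub>m (n2 * n2) (n1 * n1)) W2"
    unfolding hat_block_def power2_eq_square W1_def W2_def
    by (rule U_word_four_block_diag) simp_all
  then have "(eta_vec n1 @\<^sub>v - eta_vec n2) \<bullet>
      (U_word (n1^2 + n2^2) (hat_block n1 n2 L1 L2) w *\<^sub>v (vectorize n1 \<rho>1 @\<^sub>v vectorize n2 \<rho>2))
      = eta_vec n1 \<bullet> (W1 *\<^sub>v vectorize n1 \<rho>1) - eta_vec n2 \<bullet> (W2 *\<^sub>v vectorize n2 \<rho>2)"
    using W by (simp add: mult_mat_vec_split scalar_prod_append[where ?n1.0 = "n1 * n1" and ?n2.0 = "n2 * n2"])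
  also have "\<dots> = word_prob n1 L1 \<rho>1 w - word_prob n2 L2 \<rho>2 w"
    using assms by (simp add: W1_def W2_def word_prob_eq_eta_hat)
  finally show ?thesis ..
qed

lemma dagger_mat_of_cols_mult_eq_0_iff:
  assumes e: "e \<in> carrier_vec n" and F: "F \<in> carrier_mat n m"
  shows "dagger (mat_of_cols n [e]) * F = 0\<^sub>m 1 m \<longleftrightarrow> (\<forall>j<m. conjugate e \<bullet> col F j = 0)"
proof -
  have D: "dagger (mat_of_cols n [e]) \<in> carrier_mat 1 n" by (simp add: dagger_def)
  have "row (dagger (mat_of_cols n [e])) 0 = conjugate e"
    using e by (intro eq_vecI) (auto simp: dagger_def mat_of_cols_index)
  then have entry: "(dagger (mat_of_cols n [e]) * F) $$ (0, j) = conjugate e \<bullet> col F j" if "j < m" for j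
    using D F that by simp
  show ?thesis
  proof
    assume "dagger (mat_of_cols n [e]) * F = 0\<^sub>m 1 m"
    then show "\<forall>j<m. conjugate e \<bullet> col F j = 0" using entry by fastforce
  next
    assume "\<forall>j<m. conjugate e \<bullet> col F j = 0"
    then show "dagger (mat_of_cols n [e]) * F = 0\<^sub>m 1 m"
      using D F entry by (intro eq_matI) auto
  qed
qed

lemma scalar_prod_mult_mat_vec_eq_0:
  assumes e: "e \<in> carrier_vec n" and F: "F \<in> carrier_mat n m" and y: "y \<in> carrier_vec m"
    and cols: "\<forall>j<m. e \<bullet> col F j = 0"
  shows "e \<bullet> (F *\<^sub>v y) = 0"
proof -
  have "e \<bullet> (F *\<^sub>v y) = vec m (\<lambda>j. e \<bullet> col F j) \<bullet> y"
    using assoc_scalar_prod[OF e F y] F by (simp add: mult_mat_vec_def)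
  also have "vec m (\<lambda>j. e \<bullet> col F j) = 0\<^sub>v m" using cols by auto
  finally show ?thesis using y by simp
qed

lemma U_word_mult_intertwine:
  assumes B: "\<And>c. c \<in> C \<Longrightarrow> B c \<in> carrier_mat n n" and A: "\<And>c. c \<in> C \<Longrightarrow> A c \<in> carrier_mat m m"
    and F: "F \<in> carrier_mat n m" and BF: "\<And>c. c \<in> C \<Longrightarrow> B c * F = F * A c"
    and w: "w \<in> lists C"
  shows "U_word n B w * F = F * U_word m A w"
  using w
proof (induction w rule: rev_induct)
  case (snoc c w)
  then have c: "c \<in> C" and IH: "U_word n B w * F = F * U_word m A w" by auto
  have Bw: "U_word n B w \<in> carrier_mat n n" and Aw: "U_word m A w \<in> carrier_mat m m"
    using snoc.prems B A by (auto intro!: U_word_carrier)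
  have "U_word n B (w @ [c]) * F = B c * (U_word n B w * F)"
    unfolding U_word_snoc using B[OF c] Bw F by (rule assoc_mult_mat)
  also have "\<dots> = B c * F * U_word m A w"
    unfolding IH using B[OF c] F Aw by (rule assoc_mult_mat[symmetric])
  also have "\<dots> = F * U_word m A (w @ [c])"
    unfolding BF[OF c] U_word_snoc using F A[OF c] Aw by (rule assoc_mult_mat)
  finally show ?case .
qed (use F in simp)

lemma exists_mat_mult_eq_mult:
  assumes F: "F \<in> carrier_mat n m" and B: "B \<in> carrier_mat n n"
    and range: "\<And>j. j < m \<Longrightarrow> \<exists>x\<in>carrier_vec m. F *\<^sub>v x = B *\<^sub>v col F j"
  shows "\<exists>A \<in> carrier_mat m m. B * F = F * A"
proof -
  obtain x where x: "\<And>j. j < m \<Longrightarrow> x j \<in> carrier_vec m \<and> F *\<^sub>v x j = B *\<^sub>v col F j"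
    using range by metis
  define A where "A = mat m m (\<lambda>(i, j). x j $ i)"
  have A: "A \<in> carrier_mat m m" by (simp add: A_def)
  have col_A: "col A j = x j" if "j < m" for j
    using x[OF that] that by (auto simp: A_def)
  have "col (B * F) j = col (F * A) j" if "j < m" for j
  proof -
    have "col (B * F) j = B *\<^sub>v col F j" using B F that by (rule col_mult2)
    also have "\<dots> = F *\<^sub>v col A j" using x[OF that] col_A[OF that] by simp
    also have "\<dots> = col (F * A) j" using F A that by (rule col_mult2[symmetric])
    finally show ?thesis .
  qed
  then have "B * F = F * A"
    using F B A by (intro mat_col_eqI) auto
  then show ?thesis using A by blast
qed

lemma dim_pos_of_nonzero_vec: "v \<in> carrier_vec n \<Longrightarrow> v \<noteq> 0\<^sub>v n \<Longrightarrow> 0 < n"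
  by (metis eq_vecI carrier_vecD index_zero_vec(2) less_nat_zero_code neq0_conv)

lemma (in vec_space) exists_mat_col_space_superset:
  assumes K: "K \<subseteq> carrier_vec n" and v: "v \<in> K" "v \<noteq> 0\<^sub>v n"
  obtains F where "F \<in> carrier_mat n n" "col F 0 = v" "\<And>j. j < n \<Longrightarrow> col F j \<in> insert (0\<^sub>v n) K"
    "K \<subseteq> col_space F"
proof -
  define P where "P = (\<lambda>S. S \<subseteq> K \<and> v \<in> S \<and> lin_indpt S)"
  have bounded: "finite S \<and> card S \<le> n" if "P S" for S
    using that K li_le_dim[of S] dim_is_n by (auto simp: P_def)
  have "v \<notin> span {}" using span_empty v by simp
  then have "lin_indpt {v}"
    using lin_dep_iff_in_span[of "{}" v] v K unfolding lin_dep_def by auto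
  then have "P {v}" using v by (simp add: P_def)
  then obtain S where "finite S" "maximal S P"
    using maximal_exists[of P n "{v}"] bounded by blast
  then have S: "S \<subseteq> K" "v \<in> S" "lin_indpt S" "finite S" "card S \<le> n"
    using bounded by (auto simp: maximal_def P_def)
  have K_span: "K \<subseteq> span S"
  proof
    fix y assume y: "y \<in> K"
    show "y \<in> span S"
    proof (rule ccontr)
      assume y_notin: "y \<notin> span S"
      have "S \<subseteq> carrier_vec n" "y \<in> carrier_vec n" using S K y by auto
      moreover have "y \<notin> S" using span_mem y_notin \<open>S \<subseteq> carrier_vec n\<close> by blast
      moreover from calculation have "lin_indpt (insert y S)"
        using lin_dep_iff_in_span[of S y] S y_notin by auto
      then have "insert y S = S"
        using \<open>maximal S P\<close> S y unfolding maximal_def P_def by blast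
      ultimately show False by blast
    qed
  qed
  obtain xs where xs: "set xs = S - {v}" "distinct xs"
    using finite_distinct_list[of "S - {v}"] S by auto
  have len_xs: "length xs = card S - 1"
    using xs S by (simp add: distinct_card[symmetric])
  have "card S \<ge> 1" using S by (auto simp: Suc_le_eq card_gt_0_iff)
  define cs where "cs = v # xs @ replicate (n - card S) (0\<^sub>v n)"
  have len_cs: "length cs = n" using len_xs S \<open>card S \<ge> 1\<close> by (simp add: cs_def)
  have cs: "set cs \<subseteq> insert (0\<^sub>v n) K" using xs S v by (auto simp: cs_def)
  define F where "F = mat_of_cols n cs"
  have "0 < n" using v K by (auto intro: dim_pos_of_nonzero_vec)
  have col_F: "col F j = cs ! j" if "j < n" for j
    using that len_cs cs K unfolding F_def by (intro col_mat_of_cols) (auto dest!: nth_mem)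
  show ?thesis
  proof
    show "F \<in> carrier_mat n n" using len_cs unfolding F_def by (metis mat_of_cols_carrier(1))
    show "col F 0 = v" using col_F[OF \<open>0 < n\<close>] by (simp add: cs_def)
    show "col F j \<in> insert (0\<^sub>v n) K" if "j < n" for j
      using col_F[OF that] cs len_cs that by (auto dest!: nth_mem)
    have "S \<subseteq> set cs" using xs S by (auto simp: cs_def)
    moreover have "set (cols F) = set cs"
      using cs K unfolding F_def by (subst cols_mat_of_cols) auto
    ultimately show "K \<subseteq> col_space F"
      unfolding col_space_def using K_span span_is_monotone by blast
  qed
qed

lemma orbit_orthogonal_of_intertwiner:
  assumes B: "\<And>c. c \<in> C \<Longrightarrow> B c \<in> carrier_mat n n" and A: "\<And>c. c \<in> C \<Longrightarrow> A c \<in> carrier_mat n n"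
    and F: "F \<in> carrier_mat n n" and "0 < n" and F0: "col F 0 = v"
    and e: "e \<in> carrier_vec n" and e_F: "\<forall>j<n. e \<bullet> col F j = 0"
    and BF: "\<And>c. c \<in> C \<Longrightarrow> B c * F = F * A c"
    and w: "w \<in> lists C"
  shows "e \<bullet> (U_word n B w *\<^sub>v v) = 0"
proof -
  have Bw: "U_word n B w \<in> carrier_mat n n" and Aw: "U_word n A w \<in> carrier_mat n n"
    using w B A by (auto intro!: U_word_carrier)
  have "U_word n B w *\<^sub>v v = col (U_word n B w * F) 0"
    by (simp only: col_mult2[OF Bw F \<open>0 < n\<close>] F0)
  also have "U_word n B w * F = F * U_word n A w"
    using B A F BF w by (rule U_word_mult_intertwine)
  also have "col (F * U_word n A w) 0 = F *\<^sub>v col (U_word n A w) 0"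
    by (rule col_mult2[OF F Aw \<open>0 < n\<close>])
  finally show ?thesis
    using scalar_prod_mult_mat_vec_eq_0[OF e F _ e_F] Aw \<open>0 < n\<close> by simp
qed

lemma ex_intertwiner_of_orbit_orthogonal:
  assumes B: "\<And>c. c \<in> C \<Longrightarrow> B c \<in> carrier_mat n n"
    and v: "v \<in> carrier_vec n" "v \<noteq> 0\<^sub>v n" and e: "e \<in> carrier_vec n"
    and orth: "\<forall>w\<in>lists C. e \<bullet> (U_word n B w *\<^sub>v v) = 0"
  shows "\<exists>F A. F \<in> carrier_mat n n \<and> (\<forall>c\<in>C. A c \<in> carrier_mat n n) \<and> col F 0 = v \<and>
    (\<forall>j<n. e \<bullet> col F j = 0) \<and> (\<forall>c\<in>C. B c * F = F * A c)"
proof -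
  interpret V: vec_space "TYPE(complex)" n .
  define K where "K = {U_word n B w *\<^sub>v v | w. w \<in> lists C}"
  have K: "K \<subseteq> carrier_vec n"
    using B v by (auto simp: K_def intro!: mult_mat_vec_carrier U_word_carrier)
  have "v \<in> K" unfolding K_def using v by (intro CollectI exI[of _ "[]"]) simp
  have K_closed: "B c *\<^sub>v x \<in> K" if "x \<in> K" "c \<in> C" for x c
  proof -
    obtain w where w: "w \<in> lists C" "x = U_word n B w *\<^sub>v v" using \<open>x \<in> K\<close> by (auto simp: K_def)
    have "U_word n B w \<in> carrier_mat n n" using w B by (auto intro!: U_word_carrier)
    then have "B c *\<^sub>v x = U_word n B (w @ [c]) *\<^sub>v v"
      using w B[OF \<open>c \<in> C\<close>] v by (simp add: U_word_snoc)
    then show ?thesis using w \<open>c \<in> C\<close> unfolding K_def by fastforce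
  qed
  obtain F where F: "F \<in> carrier_mat n n" and F0: "col F 0 = v"
    and cols: "\<And>j. j < n \<Longrightarrow> col F j \<in> insert (0\<^sub>v n) K" and K_F: "K \<subseteq> V.col_space F"
    using V.exists_mat_col_space_superset[OF K \<open>v \<in> K\<close> v(2)] by blast
  have "\<exists>x\<in>carrier_vec n. F *\<^sub>v x = B c *\<^sub>v col F j" if "c \<in> C" "j < n" for c j
  proof -
    have "B c *\<^sub>v 0\<^sub>v n = 0\<^sub>v n" using B[OF \<open>c \<in> C\<close>] by (intro eq_vecI) auto
    then have "B c *\<^sub>v col F j \<in> V.col_space F"
      using cols[OF \<open>j < n\<close>] K_closed[OF _ \<open>c \<in> C\<close>] K_F V.span_zero
      by (auto simp: V.col_space_def)
    then show ?thesis using V.col_space_eq[OF F] F by auto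
  qed
  then have "\<forall>c\<in>C. \<exists>A' \<in> carrier_mat n n. B c * F = F * A'"
    using exists_mat_mult_eq_mult[OF F B] by blast
  then obtain A where "\<forall>c\<in>C. A c \<in> carrier_mat n n \<and> B c * F = F * A c"
    by metis
  moreover have "\<forall>j<n. e \<bullet> col F j = 0"
  proof (intro allI impI)
    fix j assume "j < n"
    then consider "col F j = 0\<^sub>v n" | w where "w \<in> lists C" "col F j = U_word n B w *\<^sub>v v"
      using cols unfolding K_def by blast
    then show "e \<bullet> col F j = 0" using orth e by cases auto
  qed
  ultimately show ?thesis using F F0 by blast
qed

lemma orbit_orthogonal_iff_ex_intertwiner:
  assumes "\<And>c. c \<in> C \<Longrightarrow> B c \<in> carrier_mat n n"
    and "v \<in> carrier_vec n" "v \<noteq> 0\<^sub>v n" "e \<in> carrier_vec n"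
  shows "(\<forall>w\<in>lists C. e \<bullet> (U_word n B w *\<^sub>v v) = 0) \<longleftrightarrow>
    (\<exists>F A. F \<in> carrier_mat n n \<and> (\<forall>c\<in>C. A c \<in> carrier_mat n n) \<and> col F 0 = v \<and>
      (\<forall>j<n. e \<bullet> col F j = 0) \<and> (\<forall>c\<in>C. B c * F = F * A c))"
proof
  assume "\<forall>w\<in>lists C. e \<bullet> (U_word n B w *\<^sub>v v) = 0"
  then show "\<exists>F A. F \<in> carrier_mat n n \<and> (\<forall>c\<in>C. A c \<in> carrier_mat n n) \<and> col F 0 = v \<and>
      (\<forall>j<n. e \<bullet> col F j = 0) \<and> (\<forall>c\<in>C. B c * F = F * A c)"
    using ex_intertwiner_of_orbit_orthogonal[where C = C and B = B, OF assms] by blast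
next
  assume "\<exists>F A. F \<in> carrier_mat n n \<and> (\<forall>c\<in>C. A c \<in> carrier_mat n n) \<and> col F 0 = v \<and>
      (\<forall>j<n. e \<bullet> col F j = 0) \<and> (\<forall>c\<in>C. B c * F = F * A c)"
  then obtain F A where "F \<in> carrier_mat n n" "\<And>c. c \<in> C \<Longrightarrow> A c \<in> carrier_mat n n"
    "col F 0 = v" "\<forall>j<n. e \<bullet> col F j = 0" "\<And>c. c \<in> C \<Longrightarrow> B c * F = F * A c"
    by blast
  then show "\<forall>w\<in>lists C. e \<bullet> (U_word n B w *\<^sub>v v) = 0"
    using orbit_orthogonal_of_intertwiner[where C = C and B = B and A = A, OF assms(1) _ _
        dim_pos_of_nonzero_vec[OF assms(2,3)] _ assms(4)]
    by blast
qed

lemma vectorize_neq_zero: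
  assumes "R \<in> carrier_mat d d" "mtrace R \<noteq> 0"
  shows "vectorize d R \<noteq> 0\<^sub>v (d * d)"
  using eta_vec_scalar_prod_vectorize[OF assms(1)] assms(2) by auto

lemma append_vec_neq_zero:
  assumes "a \<in> carrier_vec k" "a \<noteq> 0\<^sub>v k" "b \<in> carrier_vec l"
  shows "a @\<^sub>v b \<noteq> 0\<^sub>v (k + l)"
proof
  assume "a @\<^sub>v b = 0\<^sub>v (k + l)"
  then have "a $ i = 0" if "i < k" for i
    using assms that by (metis carrier_vecD index_append_vec(1) index_zero_vec(1) trans_less_add1)
  then show False using assms by (auto intro: eq_vecI)
qed

lemma QMM_equiv_iff_orbit_orthogonal:
  assumes U: "\<And>s. s \<in> Sig \<Longrightarrow> U1 s \<in> carrier_mat n1 n1" "\<And>s. s \<in> Sig \<Longrightarrow> U2 s \<in> carrier_mat n2 n2"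
    and M: "\<And>g. g \<in> Gam \<Longrightarrow> M1 g \<in> carrier_mat n1 n1" "\<And>g. g \<in> Gam \<Longrightarrow> M2 g \<in> carrier_mat n2 n2"
    and \<rho>: "\<rho>1 \<in> carrier_mat n1 n1" "\<rho>2 \<in> carrier_mat n2 n2"
  shows "QMM_equiv Sig Gam n1 U1 M1 \<rho>1 n2 U2 M2 \<rho>2 \<longleftrightarrow>
    (\<forall>w\<in>lists (Inl ` Sig \<union> Inr ` Gam). (eta_vec n1 @\<^sub>v - eta_vec n2) \<bullet>
      (U_word (n1^2 + n2^2) (hat_block n1 n2 (case_sum U1 M1) (case_sum U2 M2)) w *\<^sub>v
        (vectorize n1 \<rho>1 @\<^sub>v vectorize n2 \<rho>2)) = 0)"
proof -
  have diff: "word_prob n1 (case_sum U1 M1) \<rho>1 w - word_prob n2 (case_sum U2 M2) \<rho>2 w =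
      (eta_vec n1 @\<^sub>v - eta_vec n2) \<bullet>
      (U_word (n1^2 + n2^2) (hat_block n1 n2 (case_sum U1 M1) (case_sum U2 M2)) w *\<^sub>v
        (vectorize n1 \<rho>1 @\<^sub>v vectorize n2 \<rho>2))"
    if "w \<in> lists (Inl ` Sig \<union> Inr ` Gam)" for w
  proof -
    have "case_sum U1 M1 c \<in> carrier_mat n1 n1" "case_sum U2 M2 c \<in> carrier_mat n2 n2"
      if "c \<in> set w" for c
      using that \<open>w \<in> lists _\<close> U M by auto
    then show ?thesis by (rule word_prob_diff_eq_hat_block[OF _ _ \<rho>])
  qed
  have "QMM_equiv Sig Gam n1 U1 M1 \<rho>1 n2 U2 M2 \<rho>2 \<longleftrightarrow> (\<forall>w\<in>lists (Inl ` Sig \<union> Inr ` Gam).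
      word_prob n1 (case_sum U1 M1) \<rho>1 w = word_prob n2 (case_sum U2 M2) \<rho>2 w)"
    by (rule QMM_equiv_iff_word_prob) (use U M in auto)
  then show ?thesis by (simp add: diff[symmetric])
qed

lemma dagger_eta_vec_block_mult_eq_0_iff:
  assumes "F \<in> carrier_mat (n1^2 + n2^2) m"
  shows "dagger (mat_of_cols (n1^2 + n2^2) [eta_vec n1 @\<^sub>v - eta_vec n2]) * F = 0\<^sub>m 1 m \<longleftrightarrow>
    (\<forall>j<m. (eta_vec n1 @\<^sub>v - eta_vec n2) \<bullet> col F j = 0)"
proof -
  have "conjugate (eta_vec n1 @\<^sub>v - eta_vec n2) = eta_vec n1 @\<^sub>v - eta_vec n2"
    by (intro eq_vecI) (auto simp: eta_vec_def)
  moreover have "eta_vec n1 @\<^sub>v - eta_vec n2 \<in> carrier_vec (n1^2 + n2^2)"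
    by (simp add: power2_eq_square)
  ultimately show ?thesis
    using dagger_mat_of_cols_mult_eq_0_iff[OF _ assms] by simp
qed

theorem propositionC1:
  fixes Sig :: "'a set" and Gam :: "'b set"
    and n1 n2 :: nat
    and U1 U2 :: "'a \<Rightarrow> complex mat" and M1 M2 :: "'b \<Rightarrow> complex mat"
    and \<rho>1 \<rho>2 :: "complex mat"
  assumes "is_QMM Sig Gam n1 U1 M1" and "is_QMM Sig Gam n2 U2 M2"
    and "density_op n1 \<rho>1" and "density_op n2 \<rho>2"
  defines "n \<equiv> n1^2 + n2^2"
  shows "QMM_equiv Sig Gam n1 U1 M1 \<rho>1 n2 U2 M2 \<rho>2 \<longleftrightarrow>
    (\<exists>(F :: complex mat) (A :: 'a + 'b \<Rightarrow> complex mat).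
       F \<in> carrier_mat n n \<and> (\<forall>c \<in> Inl ` Sig \<union> Inr ` Gam. A c \<in> carrier_mat n n) \<and>
       col F 0 = vectorize n1 \<rho>1 @\<^sub>v vectorize n2 \<rho>2 \<and>
       dagger (mat_of_cols n [eta_vec n1 @\<^sub>v (- eta_vec n2)]) * F = 0\<^sub>m 1 n \<and>
       (\<forall>c \<in> Sig. four_block_mat (hat_mat n1 (U1 c)) (0\<^sub>m (n1^2) (n2^2))
                                    (0\<^sub>m (n2^2) (n1^2)) (hat_mat n2 (U2 c)) * F = F * A (Inl c)) \<and>
       (\<forall>c \<in> Gam. four_block_mat (hat_mat n1 (M1 c)) (0\<^sub>m (n1^2) (n2^2))
                                    (0\<^sub>m (n2^2) (n1^2)) (hat_mat n2 (M2 c)) * F = F * A (Inr c)))"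
  (is "_ \<longleftrightarrow> ?certificate")
proof -
  define e where "e = eta_vec n1 @\<^sub>v - eta_vec n2"
  define v where "v = vectorize n1 \<rho>1 @\<^sub>v vectorize n2 \<rho>2"
  define B where "B = hat_block n1 n2 (case_sum U1 M1) (case_sum U2 M2)"
  have U: "\<And>s. s \<in> Sig \<Longrightarrow> U1 s \<in> carrier_mat n1 n1" "\<And>s. s \<in> Sig \<Longrightarrow> U2 s \<in> carrier_mat n2 n2"
    and M: "\<And>g. g \<in> Gam \<Longrightarrow> M1 g \<in> carrier_mat n1 n1" "\<And>g. g \<in> Gam \<Longrightarrow> M2 g \<in> carrier_mat n2 n2"
    using assms(1,2) by (auto simp: is_QMM_def unitary_mat_def)
  have \<rho>: "\<rho>1 \<in> carrier_mat n1 n1" "\<rho>2 \<in> carrier_mat n2 n2" "mtrace \<rho>1 = 1"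
    using assms(3,4) by (auto simp: density_op_def)
  have e: "e \<in> carrier_vec n" and v: "v \<in> carrier_vec n" "v \<noteq> 0\<^sub>v n"
    using append_vec_neq_zero[OF _ vectorize_neq_zero[OF \<rho>(1)]] \<rho>(3)
    by (auto simp: e_def v_def n_def power2_eq_square)
  have "QMM_equiv Sig Gam n1 U1 M1 \<rho>1 n2 U2 M2 \<rho>2 \<longleftrightarrow>
      (\<forall>w\<in>lists (Inl ` Sig \<union> Inr ` Gam). e \<bullet> (U_word n B w *\<^sub>v v) = 0)"
    unfolding e_def v_def B_def n_def by (rule QMM_equiv_iff_orbit_orthogonal[OF U M \<rho>(1,2)])
  also have "\<dots> \<longleftrightarrow> (\<exists>F A. F \<in> carrier_mat n n \<and> (\<forall>c\<in>Inl ` Sig \<union> Inr ` Gam. A c \<in> carrier_mat n n) \<and>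
      col F 0 = v \<and> (\<forall>j<n. e \<bullet> col F j = 0) \<and> (\<forall>c\<in>Inl ` Sig \<union> Inr ` Gam. B c * F = F * A c))"
    by (rule orbit_orthogonal_iff_ex_intertwiner[OF _ v e]) (simp add: B_def hat_block_carrier n_def)
  also have "\<dots> \<longleftrightarrow> ?certificate"
    \<comment> \<open>without \<open>del\<close>, simp rewrites \<open>0\<^sub>m 1 n\<close> to \<open>0\<^sub>m (Suc 0) n\<close> before the dagger lemma applies\<close>
    unfolding e_def v_def B_def n_def
    by (simp add: dagger_eta_vec_block_mult_eq_0_iff hat_block_def ball_Un del: One_nat_def cong: conj_cong)
  finally show ?thesis .
qed

end
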